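(* Let $R$ be a commutative unital ring and $E$ an $R$-module. Then $\mathrm{Supp}_R(E)$ is Zariski closed in $\mathrm{Spec}(R)$ if and only if $\mathrm{Supp}_R(E)$ is pro-constructible. Moreover $\mathrm{Supp}_R(E)$ is Zariski closed in each of the following cases: (1) $\mathrm{Supp}_R(E)$ is finite; (2) $\mathrm{Ass}_R(E)$ is compact in the flat topology, for example if $\mathrm{Ass}_R(E)$ is pro-constructible, or finite, or closed; (3) $E$ has finite length; (4) $E$ is almost finitely generated over $R$; in this case $\mathrm V(\mathcal O_R(E))=\mathrm{Supp}_R(E)=\mathrm V(0:_RE)$ and $\mathcal O_R(E)=\sqrt{0:_RE}$.
   Context: $\mathrm{Supp}_R(E)=\{P\in\mathrm{Spec}(R)\mid E_P\neq0\}$; $\mathrm V(I)=\{P\mid I\subseteq P\}$. A subset of $\mathrm{Spec}(R)$ is pro-constructible if it is the image of $\mathrm{Spec}(T)\to\mathrm{Spec}(R)$ for some ring morphism $R\to T$. $\mathrm{Ass}_R(E)$ is the set of primes minimal among primes containing $0:_Rx$ for some $x\in E$. The flat topology on $\mathrm{Spec}(R)$ has as closed sets the images of spectra of flat $R$-algebras; the sets $\mathrm V(I)$ with $I$ finitely generated form a basis of its open sets; compactness does not require Hausdorffness. $E$ is almost finitely generated (afg) over $R$ if there is a ring morphism $R\to S$ such that $E$ is a finitely generated $S$-module whose induced $R$-module structure is the original one. $E_a$ is the localization at $\{a^n\}$ and $\mathcal O_R(E)=\{a\in R\mid E_a=0\}$. *)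

theory Defs
  imports "HOL-Algebra.Module" "HOL-Algebra.Ideal" "HOL-Algebra.RingHom" "HOL-Analysis.Analysis"
begin

definition Spec :: "('a, 'c) ring_scheme \<Rightarrow> 'a set set" where
  "Spec R = {P. primeideal P R}"

definition VV :: "('a, 'c) ring_scheme \<Rightarrow> 'a set \<Rightarrow> 'a set set" where
  "VV R I = {P \<in> Spec R. I \<subseteq> P}"

definition zariski_closed :: "('a, 'c) ring_scheme \<Rightarrow> 'a set set \<Rightarrow> bool" where
  "zariski_closed R S \<longleftrightarrow> (\<exists>I. ideal I R \<and> S = VV R I)"

definition spec_image :: "('a, 'c) ring_scheme \<Rightarrow> ('b, 'd) ring_scheme \<Rightarrow> ('a \<Rightarrow> 'b) \<Rightarrow> 'a set set" where
  "spec_image R T f = {{r \<in> carrier R. f r \<in> Q} | Q. Q \<in> Spec T}"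

text \<open>Pro-constructible, with the source ring T ranging over rings whose elements have type 'b.
  (Quantification over all types is not possible inside a HOL formula.)\<close>
definition pro_constructible :: "'b itself \<Rightarrow> ('a, 'c) ring_scheme \<Rightarrow> 'a set set \<Rightarrow> bool" where
  "pro_constructible (_ :: 'b itself) R S \<longleftrightarrow>
     (\<exists>(T :: 'b ring) f. cring T \<and> f \<in> ring_hom R T \<and> S = spec_image R T f)"

definition flat_topology :: "('a, 'c) ring_scheme \<Rightarrow> 'a set topology" where
  "flat_topology R = topology_generated_by
     {VV R (genideal R G) | G. finite G \<and> G \<subseteq> carrier R}"

text \<open>The relation defining the localization S^{-1}E (pairs (x,s) with x in E, s in S).\<close>
definition loc_rel :: "('a, 'c) ring_scheme \<Rightarrow> ('a, 'm, 'e) module_scheme \<Rightarrow> 'a set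
    \<Rightarrow> 'm \<times> 'a \<Rightarrow> 'm \<times> 'a \<Rightarrow> bool" where
  "loc_rel R E S p q \<longleftrightarrow>
     (\<exists>u\<in>S. u \<odot>\<^bsub>E\<^esub> ((snd q \<odot>\<^bsub>E\<^esub> fst p) \<ominus>\<^bsub>E\<^esub> (snd p \<odot>\<^bsub>E\<^esub> fst q)) = \<zero>\<^bsub>E\<^esub>)"

text \<open>S^{-1}E = 0: every fraction x/s equals the zero fraction 0/1.\<close>
definition loc_zero :: "('a, 'c) ring_scheme \<Rightarrow> ('a, 'm, 'e) module_scheme \<Rightarrow> 'a set \<Rightarrow> bool" where
  "loc_zero R E S \<longleftrightarrow>
     (\<forall>x\<in>carrier E. \<forall>s\<in>S. loc_rel R E S (x, s) (\<zero>\<^bsub>E\<^esub>, \<one>\<^bsub>R\<^esub>))"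

definition Supp :: "('a, 'c) ring_scheme \<Rightarrow> ('a, 'm, 'e) module_scheme \<Rightarrow> 'a set set" where
  "Supp R E = {P \<in> Spec R. \<not> loc_zero R E (carrier R - P)}"

text \<open>O_R(E) = {a | E_a = 0}, E_a the localization at {a^n}.\<close>
definition Obs :: "('a, 'c) ring_scheme \<Rightarrow> ('a, 'm, 'e) module_scheme \<Rightarrow> 'a set" where
  "Obs R E = {a \<in> carrier R. loc_zero R E {a [^]\<^bsub>R\<^esub> (n::nat) | n. True}}"

definition ann_elem :: "('a, 'c) ring_scheme \<Rightarrow> ('a, 'm, 'e) module_scheme \<Rightarrow> 'm \<Rightarrow> 'a set" where
  "ann_elem R E x = {r \<in> carrier R. r \<odot>\<^bsub>E\<^esub> x = \<zero>\<^bsub>E\<^esub>}"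

definition ann :: "('a, 'c) ring_scheme \<Rightarrow> ('a, 'm, 'e) module_scheme \<Rightarrow> 'a set" where
  "ann R E = {r \<in> carrier R. \<forall>x\<in>carrier E. r \<odot>\<^bsub>E\<^esub> x = \<zero>\<^bsub>E\<^esub>}"

definition radical :: "('a, 'c) ring_scheme \<Rightarrow> 'a set \<Rightarrow> 'a set" where
  "radical R I = {r \<in> carrier R. \<exists>n::nat. r [^]\<^bsub>R\<^esub> n \<in> I}"

definition Ass :: "('a, 'c) ring_scheme \<Rightarrow> ('a, 'm, 'e) module_scheme \<Rightarrow> 'a set set" where
  "Ass R E = {P \<in> Spec R. \<exists>x\<in>carrier E. ann_elem R E x \<subseteq> P \<and>
      (\<forall>Q\<in>Spec R. ann_elem R E x \<subseteq> Q \<and> Q \<subseteq> P \<longrightarrow> Q = P)}"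

definition finite_length :: "('a, 'c) ring_scheme \<Rightarrow> ('a, 'm, 'e) module_scheme \<Rightarrow> bool" where
  "finite_length R E \<longleftrightarrow> (\<exists>(n::nat) (M :: nat \<Rightarrow> 'm set).
     M 0 = {\<zero>\<^bsub>E\<^esub>} \<and> M n = carrier E \<and> (\<forall>i\<le>n. submodule (M i) R E) \<and>
     (\<forall>i<n. M i \<subset> M (Suc i) \<and>
        \<not> (\<exists>N. submodule N R E \<and> M i \<subset> N \<and> N \<subset> M (Suc i))))"

definition fin_gen :: "('a, 'c) ring_scheme \<Rightarrow> ('a, 'm, 'e) module_scheme \<Rightarrow> bool" where
  "fin_gen R E \<longleftrightarrow> (\<exists>G. finite G \<and> G \<subseteq> carrier E \<and>
     (\<forall>N. submodule N R E \<and> G \<subseteq> N \<longrightarrow> N = carrier E))"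

text \<open>E is afg over R via a (commutative) ring S whose elements have type 's.\<close>
definition afg :: "'s itself \<Rightarrow> ('a, 'c) ring_scheme \<Rightarrow> ('a, 'm, 'e) module_scheme \<Rightarrow> bool" where
  "afg (_ :: 's itself) R E \<longleftrightarrow>
     (\<exists>(S :: 's ring) (f :: 'a \<Rightarrow> 's) (F :: ('s, 'm) module).
        cring S \<and> f \<in> ring_hom R S \<and> Module.module S F \<and> fin_gen S F \<and>
        carrier F = carrier E \<and> add F = add E \<and> zero F = zero E \<and>
        (\<forall>r\<in>carrier R. \<forall>x\<in>carrier E. r \<odot>\<^bsub>E\<^esub> x = f r \<odot>\<^bsub>F\<^esub> x))"

end

(*
  The support of E is stable under specialization, and every prime in it lies above a prime that
  is minimal over some 0 :_R x, i.e. above an associated prime; so Supp E is the set of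
  specializations of Ass E.

  The specializations of a set A of primes that is compact in the flat topology form a Zariski
  closed set: if a prime P contains every prime above A but no member of A, choose a_Q in Q - P
  for each Q in A. The flat open sets V(a_Q) cover A, finitely many of them suffice, and the
  product of the corresponding a_Q lies in every prime above A but not in P.

  Images of spectra are compact in the flat topology by an ultrafilter argument: a maximal family
  of subsets of Spec T with the finite intersection property determines a prime of T. This gives
  the compactness statements and, applied to Supp E itself, the converse of the fact that V(I) is
  the image of Spec(R/I).

  Finally, when 0 :_R E is the annihilator of a finite subset of E, as for almost finitely
  generated modules and modules of finite length, a multiplicative set meeting every 0 :_R x
  meets 0 :_R E. This yields Supp E = V(0 :_R E) and O_R(E) = sqrt(0 :_R E).
*)

theory Submission
  imports Defs "HOL-Algebra.QuotRing"
begin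

section \<open>Prime ideals and closed subsets of the spectrum\<close>

context cring
begin

lemma Spec_ideal: "P \<in> Spec R \<Longrightarrow> ideal P R"
  unfolding Spec_def by (simp add: primeideal.axioms(1))

lemma Spec_subset_carrier: "P \<in> Spec R \<Longrightarrow> P \<subseteq> carrier R"
  using ideal.Icarr[OF Spec_ideal] by blast

lemma Spec_zero: "P \<in> Spec R \<Longrightarrow> \<zero> \<in> P"
  using additive_subgroup.zero_closed[OF ideal.axioms(1)[OF Spec_ideal]] .

lemma Spec_one_notin: "P \<in> Spec R \<Longrightarrow> \<one> \<notin> P"
  using ideal.one_imp_carrier[OF Spec_ideal] primeideal.I_notcarr unfolding Spec_def by fastforce

lemma Spec_mult_mem:
  assumes "P \<in> Spec R" "a \<in> carrier R" "b \<in> carrier R"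
  shows "a \<otimes> b \<in> P \<longleftrightarrow> a \<in> P \<or> b \<in> P"
proof
  show "a \<otimes> b \<in> P \<Longrightarrow> a \<in> P \<or> b \<in> P"
    using assms(1) primeideal.I_prime[OF _ assms(2,3)] unfolding Spec_def by simp
  show "a \<in> P \<or> b \<in> P \<Longrightarrow> a \<otimes> b \<in> P"
    using ideal.I_l_closed[OF Spec_ideal[OF assms(1)] _ assms(2)]
      ideal.I_r_closed[OF Spec_ideal[OF assms(1)] _ assms(3)] by blast
qed

lemma Spec_pow_mem:
  assumes "P \<in> Spec R" "a \<in> carrier R" "a [^] (n::nat) \<in> P"
  shows "a \<in> P"
  using assms(3)
proof (induction n)
  case 0
  then show ?case using Spec_one_notin[OF assms(1)] by simp
next
  case (Suc n)
  then show ?case using Spec_mult_mem[OF assms(1) nat_pow_closed[OF assms(2)] assms(2)] by auto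
qed

lemma Spec_Inter_chain:
  assumes "D \<noteq> {}" "D \<subseteq> Spec R" "\<And>X Y. X \<in> D \<Longrightarrow> Y \<in> D \<Longrightarrow> X \<subseteq> Y \<or> Y \<subseteq> X"
  shows "\<Inter>D \<in> Spec R"
proof -
  have "ideal (\<Inter>D) R"
    by (rule i_Intersect) (use assms(1,2) Spec_ideal in blast)+
  moreover have "carrier R \<noteq> \<Inter>D"
  proof -
    obtain X where "X \<in> D" using assms(1) by blast
    then have "\<one> \<notin> \<Inter>D" using Spec_one_notin assms(2) by blast
    then show ?thesis by auto
  qed
  moreover have "a \<in> \<Inter>D \<or> b \<in> \<Inter>D"
    if ab: "a \<in> carrier R" "b \<in> carrier R" "a \<otimes> b \<in> \<Inter>D" for a b
  proof (rule ccontr)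
    assume "\<not> (a \<in> \<Inter>D \<or> b \<in> \<Inter>D)"
    then obtain X Y where XY: "X \<in> D" "Y \<in> D" "a \<notin> X" "b \<notin> Y" by blast
    then obtain Z where Z: "Z \<in> D" "a \<notin> Z" "b \<notin> Z"
      using assms(3)[OF XY(1,2)] by blast
    then have "a \<otimes> b \<notin> Z" using Spec_mult_mem[OF _ ab(1,2)] assms(2) by blast
    then show False using ab(3) Z(1) by blast
  qed
  ultimately have "primeideal (\<Inter>D) R"
    by (intro primeidealI is_cring)
  then show ?thesis
    unfolding Spec_def by simp
qed

lemma minimal_prime_between:
  assumes "P \<in> Spec R" "J \<subseteq> P"
  obtains Q where "Q \<in> Spec R" "J \<subseteq> Q" "Q \<subseteq> P"
    "\<And>Q'. Q' \<in> Spec R \<Longrightarrow> J \<subseteq> Q' \<Longrightarrow> Q' \<subseteq> Q \<Longrightarrow> Q' = Q"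
proof -
  define A where "A = {Q \<in> Spec R. J \<subseteq> Q \<and> Q \<subseteq> P}"
  have "\<exists>Q\<in>A. \<forall>Q'\<in>A. Q' \<subseteq> Q \<longrightarrow> Q' = Q"
  proof (rule predicate_Zorn)
    show "partial_order_on A (relation_of (\<lambda>X Y. Y \<subseteq> X) A)"
      by (rule partial_order_on_relation_ofI) auto
  next
    fix C assume C: "C \<in> Chains (relation_of (\<lambda>X Y. Y \<subseteq> X) A)"
    then have CA: "C \<subseteq> A" by (rule Chains_relation_of)
    show "\<exists>L\<in>A. \<forall>X\<in>C. L \<subseteq> X"
    proof (cases "C = {}")
      case True
      have "P \<in> A" using assms unfolding A_def by blast
      then show ?thesis using True by blast
    next
      case False
      have chain: "\<And>X Y. X \<in> C \<Longrightarrow> Y \<in> C \<Longrightarrow> X \<subseteq> Y \<or> Y \<subseteq> X"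
        using C by (auto simp: Chains_def relation_of_def)
      have "C \<subseteq> Spec R" using CA by (auto simp: A_def)
      then have "\<Inter>C \<in> Spec R" using Spec_Inter_chain[OF False _ chain] by simp
      then show ?thesis using False CA unfolding A_def by blast
    qed
  qed
  then obtain Q where "Q \<in> A" "\<And>Q'. Q' \<in> A \<Longrightarrow> Q' \<subseteq> Q \<Longrightarrow> Q' = Q" by blast
  then show ?thesis using that unfolding A_def by auto
qed

lemma common_multiple_notin_prime:
  assumes "finite A" "A \<subseteq> carrier R - P" "P \<in> Spec R"
  shows "\<exists>b\<in>carrier R - P. \<forall>c\<in>A. b \<in> PIdl c"
  using assms(1,2)
proof (induction A rule: finite_induct)
  case empty
  then show ?case using Spec_one_notin[OF assms(3)] by blast
next
  case (insert c A)
  then obtain b where b: "b \<in> carrier R - P" "\<forall>c'\<in>A. b \<in> PIdl c'" by auto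
  have c: "c \<in> carrier R - P" using insert.prems by auto
  have "b \<otimes> c \<in> carrier R - P" using b(1) c Spec_mult_mem[OF assms(3)] by auto
  moreover have "b \<otimes> c \<in> PIdl c" using b(1) unfolding cgenideal_def by blast
  moreover have "b \<otimes> c \<in> PIdl c'" if "c' \<in> A" for c'
    using b that c insert.prems ideal.I_r_closed[OF cgenideal_ideal] by blast
  ultimately show ?case by blast
qed

lemma zariski_closedI:
  assumes "S \<subseteq> Spec R"
    and "\<And>P. P \<in> Spec R \<Longrightarrow> {r \<in> carrier R. \<forall>Q\<in>S. r \<in> Q} \<subseteq> P \<Longrightarrow> P \<in> S"
  shows "zariski_closed R S"
proof -
  let ?I = "{r \<in> carrier R. \<forall>Q\<in>S. r \<in> Q}"
  have "ideal ?I R"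
  proof (cases "S = {}")
    case True
    then show ?thesis using oneideal by simp
  next
    case False
    then have "?I = \<Inter>S" using assms(1) Spec_subset_carrier by blast
    moreover have "ideal (\<Inter>S) R"
      by (rule i_Intersect) (use assms(1) False Spec_ideal in auto)
    ultimately show ?thesis by simp
  qed
  moreover have "S = VV R ?I"
    using assms unfolding VV_def by blast
  ultimately show ?thesis unfolding zariski_closed_def by blast
qed

lemma VV_radical:
  assumes "I \<subseteq> carrier R"
  shows "VV R (radical R I) = VV R I"
proof -
  have "I \<subseteq> radical R I"
  proof
    fix a assume "a \<in> I"
    with assms have "a \<in> carrier R" "a [^] (1::nat) \<in> I" by auto
    then show "a \<in> radical R I" unfolding radical_def by blast
  qed
  moreover have "radical R I \<subseteq> P" if "P \<in> Spec R" "I \<subseteq> P" for P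
    using that Spec_pow_mem unfolding radical_def by blast
  ultimately show ?thesis unfolding VV_def by blast
qed

end

lemma Spec_contraction:
  assumes R: "cring R" and T: "cring T" and f: "f \<in> ring_hom R T" and Q: "Q \<in> Spec T"
  shows "{r \<in> carrier R. f r \<in> Q} \<in> Spec R"
proof -
  interpret R: cring R by (rule R)
  interpret T: cring T by (rule T)
  have "ring_hom_ring R T f" using R.ring_axioms T.ring_axioms f by (rule ring_hom_ringI2)
  then have "ideal {r \<in> carrier R. f r \<in> Q} R"
    using T.Spec_ideal[OF Q] by (rule ring_hom_ring.ideal_vimage)
  moreover have "carrier R \<noteq> {r \<in> carrier R. f r \<in> Q}"
  proof -
    have "\<one>\<^bsub>R\<^esub> \<notin> {r \<in> carrier R. f r \<in> Q}"
      using ring_hom_one[OF f] T.Spec_one_notin[OF Q] by simp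
    then show ?thesis using R.one_closed by blast
  qed
  moreover have "a \<in> {r \<in> carrier R. f r \<in> Q} \<or> b \<in> {r \<in> carrier R. f r \<in> Q}"
    if "a \<in> carrier R" "b \<in> carrier R" "a \<otimes>\<^bsub>R\<^esub> b \<in> {r \<in> carrier R. f r \<in> Q}" for a b
    using that T.Spec_mult_mem[OF Q] ring_hom_mult[OF f] ring_hom_closed[OF f] by simp
  ultimately have "primeideal {r \<in> carrier R. f r \<in> Q} R"
    by (intro primeidealI R)
  then show ?thesis unfolding Spec_def by simp
qed

context cring
begin

lemma Spec_quotient_image:
  assumes I: "ideal I R" and P: "P \<in> Spec R" "I \<subseteq> P"
  shows "(+>) I ` P \<in> Spec (R Quot I)" and "{r \<in> carrier R. I +> r \<in> (+>) I ` P} = P"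
proof -
  interpret I: ideal I R by (rule I)
  let ?Q = "(+>) I ` P"
  have Qi: "ideal ?Q (R Quot I)" using ring_ideal_imp_quot_ideal[OF I Spec_ideal[OF P(1)]] .
  have Qc: "?Q \<subseteq> carrier (R Quot I)" using ideal.Icarr[OF Qi] by blast
  have "\<Union>?Q = P" using ideal_incl_iff[OF I Spec_ideal[OF P(1)]] P(2) by simp
  then have mem: "I +> a \<in> ?Q \<longleftrightarrow> a \<in> P" if "a \<in> carrier R" for a
    using canonical_proj_vimage_mem_iff[OF I Qc that] by simp
  have carr: "\<exists>a\<in>carrier R. x = I +> a" if "x \<in> carrier (R Quot I)" for x
    using that unfolding FactRing_def A_RCOSETS_def' by simp
  have "primeideal ?Q (R Quot I)"
  proof (rule primeidealI[OF Qi I.quotient_is_cring[OF is_cring]])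
    have "I +> \<one> \<in> carrier (R Quot I)" unfolding FactRing_def A_RCOSETS_def' by auto
    moreover have "I +> \<one> \<notin> ?Q" using mem[OF one_closed] Spec_one_notin[OF P(1)] by simp
    ultimately show "carrier (R Quot I) \<noteq> ?Q" by blast
  next
    fix x y assume xy: "x \<in> carrier (R Quot I)" "y \<in> carrier (R Quot I)" "x \<otimes>\<^bsub>R Quot I\<^esub> y \<in> ?Q"
    obtain a b where ab: "a \<in> carrier R" "x = I +> a" "b \<in> carrier R" "y = I +> b"
      using carr xy(1,2) by blast
    then have "x \<otimes>\<^bsub>R Quot I\<^esub> y = I +> (a \<otimes> b)"
      using I.rcoset_mult_add by (simp add: FactRing_def)
    with xy(3) ab have "a \<otimes> b \<in> P" using mem[of "a \<otimes> b"] by simp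
    with ab have "a \<in> P \<or> b \<in> P" using Spec_mult_mem[OF P(1)] by simp
    with ab mem show "x \<in> ?Q \<or> y \<in> ?Q" by blast
  qed
  then show "?Q \<in> Spec (R Quot I)" unfolding Spec_def by simp
  show "{r \<in> carrier R. I +> r \<in> ?Q} = P" using mem Spec_subset_carrier[OF P(1)] by blast
qed

lemma VV_eq_spec_image_quotient:
  assumes I: "ideal I R"
  shows "VV R I = spec_image R (R Quot I) ((+>) I)"
proof (intro equalityI subsetI)
  fix P assume "P \<in> VV R I"
  then have P: "P \<in> Spec R" "I \<subseteq> P" unfolding VV_def by simp_all
  then have "(+>) I ` P \<in> Spec (R Quot I)" "P = {r \<in> carrier R. I +> r \<in> (+>) I ` P}"
    using Spec_quotient_image[OF I] by simp_all
  then show "P \<in> spec_image R (R Quot I) ((+>) I)"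
    unfolding spec_image_def by blast
next
  interpret I: ideal I R by (rule I)
  fix P assume "P \<in> spec_image R (R Quot I) ((+>) I)"
  then obtain Q where Q: "Q \<in> Spec (R Quot I)" "P = {r \<in> carrier R. I +> r \<in> Q}"
    unfolding spec_image_def by auto
  have "P \<in> Spec R"
    unfolding Q(2) using is_cring I.quotient_is_cring[OF is_cring] I.rcos_ring_hom Q(1)
    by (rule Spec_contraction)
  moreover have "I \<subseteq> P"
  proof
    fix r assume r: "r \<in> I"
    have "I \<in> Q" using cring.Spec_zero[OF I.quotient_is_cring[OF is_cring] Q(1)]
      by (simp add: FactRing_def)
    then show "r \<in> P" unfolding Q(2) using I.a_rcos_const[OF r] r I.Icarr by simp
  qed
  ultimately show "P \<in> VV R I" unfolding VV_def by simp
qed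

text \<open>The witness is \<open>R Quot I\<close>, whose elements are cosets; hence the element type \<open>'a set\<close>.\<close>

lemma zariski_closed_pro_constructible:
  assumes "zariski_closed R S"
  shows "pro_constructible TYPE('a set) R S"
proof -
  obtain I where I: "ideal I R" "S = VV R I" using assms unfolding zariski_closed_def by blast
  interpret I: ideal I R by (rule I(1))
  show ?thesis
    unfolding pro_constructible_def
    using I.quotient_is_cring[OF is_cring] I.rcos_ring_hom VV_eq_spec_image_quotient I by blast
qed

end

section \<open>The flat topology\<close>

lemma generate_topology_on_local_basis:
  assumes "generate_topology_on \<S> U" "x \<in> U"
    and "\<And>A B. A \<in> \<S> \<Longrightarrow> B \<in> \<S> \<Longrightarrow> A \<inter> B \<in> \<S>"
  shows "\<exists>B\<in>\<S>. x \<in> B \<and> B \<subseteq> U"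
  using assms(1,2)
proof (induction arbitrary: x rule: generate_topology_on.induct)
  case Empty
  then show ?case by simp
next
  case (Int a b)
  obtain A where "A \<in> \<S>" "x \<in> A" "A \<subseteq> a"
    using Int.IH(1) Int.prems by blast
  moreover obtain B where "B \<in> \<S>" "x \<in> B" "B \<subseteq> b"
    using Int.IH(2) Int.prems by blast
  ultimately show ?case using assms(3)[of A B] by blast
next
  case (UN K)
  from UN.prems obtain k where k: "k \<in> K" "x \<in> k" by blast
  then obtain B where "B \<in> \<S>" "x \<in> B" "B \<subseteq> k" using UN.IH by blast
  then show ?case using k(1) by blast
next
  case (Basis s)
  then show ?case by blast
qed

context cring
begin

lemma VV_genideal:
  assumes "G \<subseteq> carrier R"
  shows "VV R (Idl G) = {P \<in> Spec R. G \<subseteq> P}"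
proof -
  have "Idl G \<subseteq> P \<longleftrightarrow> G \<subseteq> P" if "P \<in> Spec R" for P
    using Idl_subset_ideal[OF Spec_ideal[OF that] assms] .
  then show ?thesis unfolding VV_def by auto
qed

lemma flat_topology_eq:
  "flat_topology R = topology_generated_by {{P \<in> Spec R. G \<subseteq> P} | G. finite G \<and> G \<subseteq> carrier R}"
proof -
  have "{VV R (Idl G) | G. finite G \<and> G \<subseteq> carrier R}
      = {{P \<in> Spec R. G \<subseteq> P} | G. finite G \<and> G \<subseteq> carrier R}"
  proof (intro equalityI subsetI)
    fix S assume "S \<in> {VV R (Idl G) | G. finite G \<and> G \<subseteq> carrier R}"
    then obtain G where "finite G" "G \<subseteq> carrier R" "S = VV R (Idl G)" by blast
    then show "S \<in> {{P \<in> Spec R. G \<subseteq> P} | G. finite G \<and> G \<subseteq> carrier R}"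
      using VV_genideal by blast
  next
    fix S assume "S \<in> {{P \<in> Spec R. G \<subseteq> P} | G. finite G \<and> G \<subseteq> carrier R}"
    then obtain G where "finite G" "G \<subseteq> carrier R" "S = {P \<in> Spec R. G \<subseteq> P}" by blast
    then show "S \<in> {VV R (Idl G) | G. finite G \<and> G \<subseteq> carrier R}"
      using VV_genideal by blast
  qed
  then show ?thesis unfolding flat_topology_def by simp
qed

lemma topspace_flat_topology: "topspace (flat_topology R) = Spec R"
proof -
  have "{P \<in> Spec R. {} \<subseteq> P} = Spec R" by simp
  then show ?thesis unfolding flat_topology_eq topology_generated_by_topspace by blast
qed

lemma openin_flat_topology_basic:
  "finite G \<Longrightarrow> G \<subseteq> carrier R \<Longrightarrow> openin (flat_topology R) {P \<in> Spec R. G \<subseteq> P}"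
  unfolding flat_topology_eq by (rule topology_generated_by_Basis) blast

lemma openin_flat_topologyE:
  assumes "openin (flat_topology R) U" "P \<in> U"
  obtains G where "finite G" "G \<subseteq> carrier R" "G \<subseteq> P" "{Q \<in> Spec R. G \<subseteq> Q} \<subseteq> U"
proof -
  let ?\<S> = "{{P \<in> Spec R. G \<subseteq> P} | G. finite G \<and> G \<subseteq> carrier R}"
  have "A \<inter> B \<in> ?\<S>" if A: "A \<in> ?\<S>" and B: "B \<in> ?\<S>" for A B
  proof -
    from A obtain G1 where G1: "finite G1" "G1 \<subseteq> carrier R" "A = {P \<in> Spec R. G1 \<subseteq> P}"
      by auto
    from B obtain G2 where G2: "finite G2" "G2 \<subseteq> carrier R" "B = {P \<in> Spec R. G2 \<subseteq> P}"
      by auto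
    have "A \<inter> B = {P \<in> Spec R. G1 \<union> G2 \<subseteq> P}" using G1(3) G2(3) by auto
    moreover have "finite (G1 \<union> G2)" "G1 \<union> G2 \<subseteq> carrier R" using G1 G2 by auto
    ultimately show ?thesis by blast
  qed
  note inter_closed = this
  have "generate_topology_on ?\<S> U"
    using assms(1) unfolding flat_topology_eq by (rule openin_topology_generated_by)
  then have "\<exists>B\<in>?\<S>. P \<in> B \<and> B \<subseteq> U"
    using assms(2) inter_closed by (rule generate_topology_on_local_basis)
  then obtain B where "B \<in> ?\<S>" "P \<in> B" "B \<subseteq> U" by (elim bexE conjE)
  from \<open>B \<in> ?\<S>\<close> obtain G where G: "finite G" "G \<subseteq> carrier R" "B = {Q \<in> Spec R. G \<subseteq> Q}"
    by auto
  from \<open>P \<in> B\<close> \<open>B \<subseteq> U\<close> have "G \<subseteq> P" "{Q \<in> Spec R. G \<subseteq> Q} \<subseteq> U"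
    unfolding G(3) by auto
  with G(1,2) show ?thesis by (rule that)
qed

end

definition fip_within :: "'a set \<Rightarrow> 'a set set \<Rightarrow> bool" where
  "fip_within X \<M> \<longleftrightarrow> (\<forall>\<F>. finite \<F> \<and> \<F> \<subseteq> \<M> \<longrightarrow> (\<exists>x\<in>X. \<forall>A\<in>\<F>. x \<in> A))"

text \<open>Maximal families with the finite intersection property within \<open>X\<close> play the role
  of ultrafilters on \<open>X\<close>.\<close>

locale maximal_fip =
  fixes X :: "'a set" and \<M> :: "'a set set"
  assumes fip: "fip_within X \<M>"
    and maximal: "\<And>A. fip_within X (insert A \<M>) \<Longrightarrow> A \<in> \<M>"
begin

lemma fipD: "finite \<F> \<Longrightarrow> \<F> \<subseteq> \<M> \<Longrightarrow> \<exists>x\<in>X. \<forall>A\<in>\<F>. x \<in> A"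
  using fip unfolding fip_within_def by blast

lemma mem_iff: "B \<in> \<M> \<longleftrightarrow> (\<forall>\<F>. finite \<F> \<longrightarrow> \<F> \<subseteq> \<M> \<longrightarrow> (\<exists>x\<in>X. x \<in> B \<and> (\<forall>A\<in>\<F>. x \<in> A)))"
proof
  assume "B \<in> \<M>"
  show "\<forall>\<F>. finite \<F> \<longrightarrow> \<F> \<subseteq> \<M> \<longrightarrow> (\<exists>x\<in>X. x \<in> B \<and> (\<forall>A\<in>\<F>. x \<in> A))"
  proof (intro allI impI)
    fix \<F> assume "finite \<F>" "\<F> \<subseteq> \<M>"
    with \<open>B \<in> \<M>\<close> have "finite (insert B \<F>)" "insert B \<F> \<subseteq> \<M>" by auto
    then obtain x where "x \<in> X" "\<forall>A\<in>insert B \<F>. x \<in> A" using fipD by blast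
    then show "\<exists>x\<in>X. x \<in> B \<and> (\<forall>A\<in>\<F>. x \<in> A)" by auto
  qed
next
  assume B: "\<forall>\<F>. finite \<F> \<longrightarrow> \<F> \<subseteq> \<M> \<longrightarrow> (\<exists>x\<in>X. x \<in> B \<and> (\<forall>A\<in>\<F>. x \<in> A))"
  show "B \<in> \<M>"
  proof (rule maximal)
    show "fip_within X (insert B \<M>)"
      unfolding fip_within_def
    proof (intro allI impI)
      fix \<F> assume "finite \<F> \<and> \<F> \<subseteq> insert B \<M>"
      then have "finite (\<F> - {B})" "\<F> - {B} \<subseteq> \<M>" by auto
      then obtain x where "x \<in> X" "x \<in> B" "\<forall>A\<in>\<F> - {B}. x \<in> A"
        using B by blast
      then show "\<exists>x\<in>X. \<forall>A\<in>\<F>. x \<in> A" by blast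
    qed
  qed
qed

lemma Inter_mem:
  assumes "finite \<F>" "\<F> \<subseteq> \<M>"
  shows "X \<inter> \<Inter>\<F> \<in> \<M>"
  unfolding mem_iff
proof (intro allI impI)
  fix \<F>' assume "finite \<F>'" "\<F>' \<subseteq> \<M>"
  with assms have "finite (\<F> \<union> \<F>')" "\<F> \<union> \<F>' \<subseteq> \<M>" by simp_all
  then obtain x where "x \<in> X" "\<forall>A\<in>\<F> \<union> \<F>'. x \<in> A" using fipD by blast
  then show "\<exists>x\<in>X. x \<in> X \<inter> \<Inter>\<F> \<and> (\<forall>A\<in>\<F>'. x \<in> A)" by blast
qed

lemma superset_mem:
  assumes "A \<in> \<M>" "X \<inter> A \<subseteq> B"
  shows "B \<in> \<M>"
  unfolding mem_iff
proof (intro allI impI)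
  fix \<F> assume "finite \<F>" "\<F> \<subseteq> \<M>"
  with assms(1) have "finite (insert A \<F>)" "insert A \<F> \<subseteq> \<M>" by simp_all
  then obtain x where "x \<in> X" "\<forall>C\<in>insert A \<F>. x \<in> C" using fipD by blast
  with assms(2) show "\<exists>x\<in>X. x \<in> B \<and> (\<forall>C\<in>\<F>. x \<in> C)" by blast
qed

lemma mem_nonempty:
  assumes "A \<in> \<M>"
  shows "X \<inter> A \<noteq> {}"
proof -
  from assms obtain x where "x \<in> X" "\<forall>C\<in>{A}. x \<in> C" using fipD[of "{A}"] by blast
  then show ?thesis by blast
qed

lemma Un_mem:
  assumes "A \<union> B \<in> \<M>"
  shows "A \<in> \<M> \<or> B \<in> \<M>"
proof (rule ccontr)
  assume "\<not> (A \<in> \<M> \<or> B \<in> \<M>)"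
  then obtain \<F>1 \<F>2 where
    F1: "finite \<F>1" "\<F>1 \<subseteq> \<M>" "\<not> (\<exists>x\<in>X. x \<in> A \<and> (\<forall>C\<in>\<F>1. x \<in> C))" and
    F2: "finite \<F>2" "\<F>2 \<subseteq> \<M>" "\<not> (\<exists>x\<in>X. x \<in> B \<and> (\<forall>C\<in>\<F>2. x \<in> C))"
    unfolding mem_iff by blast
  with assms have "finite (insert (A \<union> B) (\<F>1 \<union> \<F>2))" "insert (A \<union> B) (\<F>1 \<union> \<F>2) \<subseteq> \<M>"
    by simp_all
  then obtain x where "x \<in> X" "\<forall>C\<in>insert (A \<union> B) (\<F>1 \<union> \<F>2). x \<in> C"
    using fipD by blast
  with F1(3) F2(3) show False by blast
qed

end

lemma maximal_fip_extension:
  assumes "fip_within X \<D>"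
  obtains \<M> where "\<D> \<subseteq> \<M>" "maximal_fip X \<M>"
proof -
  define \<A> where "\<A> = {\<M>. \<D> \<subseteq> \<M> \<and> fip_within X \<M>}"
  have "\<exists>\<M>\<in>\<A>. \<forall>\<M>'\<in>\<A>. \<M> \<subseteq> \<M>' \<longrightarrow> \<M>' = \<M>"
  proof (rule subset_Zorn_nonempty)
    show "\<A> \<noteq> {}" using assms unfolding \<A>_def by blast
  next
    fix \<C> assume \<C>: "\<C> \<noteq> {}" "subset.chain \<A> \<C>"
    then have \<C>_\<A>: "\<C> \<subseteq> \<A>" unfolding subset.chain_def by blast
    have "fip_within X (\<Union>\<C>)"
      unfolding fip_within_def
    proof (intro allI impI)
      fix \<F> assume \<F>: "finite \<F> \<and> \<F> \<subseteq> \<Union>\<C>"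
      then obtain \<M> where "\<M> \<in> \<C>" "\<F> \<subseteq> \<M>"
        using finite_subset_Union_chain[of \<F> \<C> \<A>] \<C> by blast
      moreover from \<open>\<M> \<in> \<C>\<close> \<C>_\<A> have "fip_within X \<M>" unfolding \<A>_def by blast
      ultimately show "\<exists>x\<in>X. \<forall>A\<in>\<F>. x \<in> A"
        using \<F> unfolding fip_within_def by blast
    qed
    moreover have "\<D> \<subseteq> \<Union>\<C>"
    proof -
      obtain \<M> where "\<M> \<in> \<C>" using \<C>(1) by blast
      with \<C>_\<A> show ?thesis unfolding \<A>_def by blast
    qed
    ultimately show "\<Union>\<C> \<in> \<A>" unfolding \<A>_def by blast
  qed
  then obtain \<M> where "\<M> \<in> \<A>" "\<forall>\<M>'\<in>\<A>. \<M> \<subseteq> \<M>' \<longrightarrow> \<M>' = \<M>"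
    by (elim bexE)
  then have "\<D> \<subseteq> \<M>" "maximal_fip X \<M>"
    unfolding \<A>_def maximal_fip_def by blast+
  then show ?thesis by (rule that)
qed

context cring
begin

lemma maximal_fip_Spec_ideal:
  assumes "maximal_fip (Spec R) \<M>"
  shows "ideal {a \<in> carrier R. {P \<in> Spec R. a \<in> P} \<in> \<M>} R"
proof -
  interpret maximal_fip "Spec R" \<M> by (rule assms)
  define V where "V a = {P \<in> Spec R. a \<in> P}" for a
  define Q where "Q = {a \<in> carrier R. V a \<in> \<M>}"
  have V_Int: "V a \<inter> V b \<in> \<M>" if "V a \<in> \<M>" "V b \<in> \<M>" for a b
  proof -
    have "Spec R \<inter> \<Inter>{V a, V b} \<in> \<M>" using Inter_mem[of "{V a, V b}"] that by simp
    moreover have "Spec R \<inter> \<Inter>{V a, V b} = V a \<inter> V b" unfolding V_def by blast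
    ultimately show ?thesis by simp
  qed
  have V_mono: "V b \<in> \<M>" if "V a \<in> \<M>" "V a \<subseteq> V b" for a b
    using superset_mem that by blast
  have zero: "\<zero> \<in> Q"
  proof -
    have "V \<zero> = Spec R \<inter> \<Inter>{}" unfolding V_def using Spec_zero by auto
    then show ?thesis unfolding Q_def using Inter_mem[of "{}"] by simp
  qed
  have add: "a \<oplus> b \<in> Q" if "a \<in> Q" "b \<in> Q" for a b
  proof -
    from that have ab: "a \<in> carrier R" "b \<in> carrier R" "V a \<in> \<M>" "V b \<in> \<M>"
      unfolding Q_def by simp_all
    have "V a \<inter> V b \<subseteq> V (a \<oplus> b)"
      unfolding V_def using additive_subgroup.a_closed[OF ideal.axioms(1)[OF Spec_ideal]] by blast
    with ab(3,4) have "V (a \<oplus> b) \<in> \<M>" using V_Int superset_mem by blast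
    with ab(1,2) show ?thesis unfolding Q_def by simp
  qed
  have neg: "\<ominus> a \<in> Q" if "a \<in> Q" for a
  proof -
    have "V a \<subseteq> V (\<ominus> a)"
      unfolding V_def using additive_subgroup.a_inv_closed[OF ideal.axioms(1)[OF Spec_ideal]] by blast
    then show ?thesis using that V_mono unfolding Q_def by blast
  qed
  have mult: "x \<otimes> a \<in> Q" "a \<otimes> x \<in> Q" if "a \<in> Q" "x \<in> carrier R" for a x
  proof -
    have "V a \<subseteq> V (x \<otimes> a)" unfolding V_def using ideal.I_l_closed[OF Spec_ideal] that(2) by blast
    then show "x \<otimes> a \<in> Q" using that V_mono unfolding Q_def by blast
    then show "a \<otimes> x \<in> Q" using that m_comm unfolding Q_def by simp
  qed
  have "subgroup Q (add_monoid R)"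
    by (rule add.subgroupI) (use zero neg add in \<open>auto simp: Q_def\<close>)
  then have "ideal Q R" by (rule idealI[OF ring_axioms]) (use mult in auto)
  then show ?thesis unfolding Q_def V_def .
qed

lemma maximal_fip_Spec_prime:
  assumes "maximal_fip (Spec R) \<M>"
  shows "{a \<in> carrier R. {P \<in> Spec R. a \<in> P} \<in> \<M>} \<in> Spec R"
proof -
  interpret maximal_fip "Spec R" \<M> by (rule assms)
  define V where "V a = {P \<in> Spec R. a \<in> P}" for a
  define Q where "Q = {a \<in> carrier R. V a \<in> \<M>}"
  have "V \<one> = {}" unfolding V_def using Spec_one_notin by blast
  then have "\<one> \<notin> Q" using mem_nonempty unfolding Q_def by fastforce
  then have "carrier R \<noteq> Q" using one_closed by blast
  moreover have "a \<in> Q \<or> b \<in> Q" if "a \<in> carrier R" "b \<in> carrier R" "a \<otimes> b \<in> Q" for a b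
  proof -
    have "V (a \<otimes> b) = V a \<union> V b" unfolding V_def using Spec_mult_mem that(1,2) by blast
    then show ?thesis using that Un_mem unfolding Q_def by simp
  qed
  ultimately have "primeideal Q R"
    using maximal_fip_Spec_ideal[OF assms] unfolding Q_def V_def
    by (intro primeidealI is_cring)
  then show ?thesis unfolding Spec_def Q_def V_def by simp
qed

text \<open>If no finite subfamily sufficed, the sets \<open>{P. \<not> G \<subseteq> P}\<close> would extend to a maximal family
  with the finite intersection property, and the prime it determines would contain no member of \<open>\<G>\<close>.\<close>

lemma Spec_basic_cover_finite:
  assumes fin: "\<And>G. G \<in> \<G> \<Longrightarrow> finite G"
    and cover: "\<And>P. P \<in> Spec R \<Longrightarrow> \<exists>G\<in>\<G>. G \<subseteq> P"
  obtains \<G>' where "finite \<G>'" "\<G>' \<subseteq> \<G>" "\<And>P. P \<in> Spec R \<Longrightarrow> \<exists>G\<in>\<G>'. G \<subseteq> P"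
proof (rule ccontr)
  note subcover = that
  assume no_subcover: "\<not> thesis"
  define D where "D G = {P \<in> Spec R. \<not> G \<subseteq> P}" for G
  have "fip_within (Spec R) (D ` \<G>)"
    unfolding fip_within_def
  proof (intro allI impI)
    fix \<F> assume "finite \<F> \<and> \<F> \<subseteq> D ` \<G>"
    then obtain \<G>' where \<G>': "\<G>' \<subseteq> \<G>" "finite \<G>'" "\<F> = D ` \<G>'"
      by (meson finite_subset_image)
    have "\<not> (\<forall>P\<in>Spec R. \<exists>G\<in>\<G>'. G \<subseteq> P)"
      using subcover[OF \<G>'(2,1)] no_subcover by blast
    then obtain P where "P \<in> Spec R" "\<forall>G\<in>\<G>'. \<not> G \<subseteq> P" by blast
    with \<G>'(3) show "\<exists>P\<in>Spec R. \<forall>A\<in>\<F>. P \<in> A" unfolding D_def by blast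
  qed
  then obtain \<M> where \<M>: "D ` \<G> \<subseteq> \<M>" "maximal_fip (Spec R) \<M>"
    by (rule maximal_fip_extension)
  interpret maximal_fip "Spec R" \<M> by (rule \<M>(2))
  define Q where "Q = {a \<in> carrier R. {P \<in> Spec R. a \<in> P} \<in> \<M>}"
  have "Q \<in> Spec R" unfolding Q_def by (rule maximal_fip_Spec_prime[OF \<M>(2)])
  then obtain G where G: "G \<in> \<G>" "G \<subseteq> Q" using cover by blast
  let ?V = "(\<lambda>a. {P \<in> Spec R. a \<in> P}) ` G"
  have "finite (insert (D G) ?V)" "insert (D G) ?V \<subseteq> \<M>"
    using fin[OF G(1)] G \<M>(1) unfolding Q_def by auto
  then have "Spec R \<inter> \<Inter>(insert (D G) ?V) \<in> \<M>" by (rule Inter_mem)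
  moreover have "Spec R \<inter> \<Inter>(insert (D G) ?V) = {}" unfolding D_def by blast
  ultimately show False using mem_nonempty by fastforce
qed

lemma compactin_flat_topologyI:
  assumes S: "S \<subseteq> Spec R"
    and basic: "\<And>Gf. (\<And>y. y \<in> S \<Longrightarrow> finite (Gf y) \<and> Gf y \<subseteq> carrier R \<and> Gf y \<subseteq> y) \<Longrightarrow>
      \<exists>S0\<subseteq>S. finite S0 \<and> (\<forall>z\<in>S. \<exists>y\<in>S0. Gf y \<subseteq> z)"
  shows "compactin (flat_topology R) S"
  unfolding compactin_def topspace_flat_topology
proof (intro conjI allI impI)
  show "S \<subseteq> Spec R" by (rule S)
  fix \<U> assume \<U>: "(\<forall>U\<in>\<U>. openin (flat_topology R) U) \<and> S \<subseteq> \<Union>\<U>"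
  have "\<forall>y\<in>S. \<exists>U. U \<in> \<U> \<and> y \<in> U" using \<U> by blast
  then have "\<exists>Uf. \<forall>y\<in>S. Uf y \<in> \<U> \<and> y \<in> Uf y" by (rule bchoice)
  then obtain Uf where Uf: "\<forall>y\<in>S. Uf y \<in> \<U> \<and> y \<in> Uf y" by (rule exE)
  have "\<forall>y\<in>S. \<exists>G. finite G \<and> G \<subseteq> carrier R \<and> G \<subseteq> y \<and> {P \<in> Spec R. G \<subseteq> P} \<subseteq> Uf y"
  proof
    fix y assume "y \<in> S"
    with Uf \<U> have "openin (flat_topology R) (Uf y)" "y \<in> Uf y" by simp_all
    then obtain G where "finite G" "G \<subseteq> carrier R" "G \<subseteq> y" "{P \<in> Spec R. G \<subseteq> P} \<subseteq> Uf y"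
      by (rule openin_flat_topologyE)
    then show "\<exists>G. finite G \<and> G \<subseteq> carrier R \<and> G \<subseteq> y \<and> {P \<in> Spec R. G \<subseteq> P} \<subseteq> Uf y"
      by blast
  qed
  then have "\<exists>Gf. \<forall>y\<in>S. finite (Gf y) \<and> Gf y \<subseteq> carrier R \<and> Gf y \<subseteq> y \<and>
      {P \<in> Spec R. Gf y \<subseteq> P} \<subseteq> Uf y"
    by (rule bchoice)
  then obtain Gf where Gf: "\<forall>y\<in>S. finite (Gf y) \<and> Gf y \<subseteq> carrier R \<and> Gf y \<subseteq> y \<and>
      {P \<in> Spec R. Gf y \<subseteq> P} \<subseteq> Uf y"
    by (rule exE)
  then have "\<exists>S0\<subseteq>S. finite S0 \<and> (\<forall>z\<in>S. \<exists>y\<in>S0. Gf y \<subseteq> z)" by (intro basic) blast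
  then obtain S0 where S0: "S0 \<subseteq> S" "finite S0" "\<forall>z\<in>S. \<exists>y\<in>S0. Gf y \<subseteq> z" by blast
  have "S \<subseteq> \<Union>(Uf ` S0)"
  proof
    fix z assume z: "z \<in> S"
    with S0(3) obtain y where y: "y \<in> S0" "Gf y \<subseteq> z" by blast
    from y(1) S0(1) Gf have "{P \<in> Spec R. Gf y \<subseteq> P} \<subseteq> Uf y" by blast
    with z S y(2) have "z \<in> Uf y" by blast
    with y(1) show "z \<in> \<Union>(Uf ` S0)" by blast
  qed
  moreover have "Uf ` S0 \<subseteq> \<U>" using S0(1) Uf by blast
  ultimately show "\<exists>\<F>. finite \<F> \<and> \<F> \<subseteq> \<U> \<and> S \<subseteq> \<Union>\<F>" using S0(2) by blast
qed

lemma compactin_flat_spec_image: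
  fixes T :: "('x, 'y) ring_scheme"
  assumes T: "cring T" and S: "spec_image R T f \<subseteq> Spec R"
  shows "compactin (flat_topology R) (spec_image R T f)"
  using S
proof (rule compactin_flat_topologyI)
  let ?S = "spec_image R T f"
  let ?contr = "\<lambda>Q. {r \<in> carrier R. f r \<in> Q}"
  fix Gf assume Gf: "\<And>y. y \<in> ?S \<Longrightarrow> finite (Gf y) \<and> Gf y \<subseteq> carrier R \<and> Gf y \<subseteq> y"
  let ?\<G> = "(\<lambda>y. f ` Gf y) ` ?S"
  have contr_mem: "?contr Q \<in> ?S" if "Q \<in> Spec T" for Q
    unfolding spec_image_def using that by (intro CollectI exI[of _ Q]) simp
  have \<G>_finite: "finite G" if "G \<in> ?\<G>" for G
  proof -
    from that obtain y where "y \<in> ?S" "G = f ` Gf y" by (elim imageE)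
    with Gf show ?thesis by simp
  qed
  have \<G>_cover: "\<exists>G\<in>?\<G>. G \<subseteq> Q" if "Q \<in> Spec T" for Q
  proof -
    have "Gf (?contr Q) \<subseteq> ?contr Q" using Gf contr_mem[OF that] by blast
    then have "f ` Gf (?contr Q) \<subseteq> Q" by blast
    moreover have "f ` Gf (?contr Q) \<in> ?\<G>" using contr_mem[OF that] by (rule imageI)
    ultimately show ?thesis by blast
  qed
  obtain \<G>' where \<G>': "finite \<G>'" "\<G>' \<subseteq> ?\<G>" "\<And>Q. Q \<in> Spec T \<Longrightarrow> \<exists>G\<in>\<G>'. G \<subseteq> Q"
    using cring.Spec_basic_cover_finite[OF T \<G>_finite \<G>_cover] by blast
  then obtain S0 where S0: "S0 \<subseteq> ?S" "finite S0" "\<G>' = (\<lambda>y. f ` Gf y) ` S0"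
    by (meson finite_subset_image)
  have "\<exists>y\<in>S0. Gf y \<subseteq> z" if "z \<in> ?S" for z
  proof -
    from that obtain Q where Q: "Q \<in> Spec T" "z = ?contr Q" unfolding spec_image_def by auto
    obtain y where y: "y \<in> S0" "f ` Gf y \<subseteq> Q" using \<G>'(3)[OF Q(1)] S0(3) by blast
    with S0(1) Gf have "Gf y \<subseteq> carrier R" by blast
    with y Q(2) show ?thesis by blast
  qed
  with S0(1,2) show "\<exists>S0\<subseteq>?S. finite S0 \<and> (\<forall>z\<in>?S. \<exists>y\<in>S0. Gf y \<subseteq> z)" by blast
qed

lemma spec_image_id: "spec_image R R (\<lambda>x. x) = Spec R"
proof (intro equalityI subsetI)
  fix P assume "P \<in> spec_image R R (\<lambda>x. x)"
  then obtain Q where "Q \<in> Spec R" "P = {r \<in> carrier R. r \<in> Q}"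
    unfolding spec_image_def by auto
  then show "P \<in> Spec R" using Spec_subset_carrier[of Q] by (simp add: Int_absorb1 Collect_conj_eq)
next
  fix P assume "P \<in> Spec R"
  then have "P = {r \<in> carrier R. r \<in> P}" using Spec_subset_carrier by blast
  with \<open>P \<in> Spec R\<close> show "P \<in> spec_image R R (\<lambda>x. x)"
    unfolding spec_image_def by (intro CollectI exI[of _ P]) simp
qed

lemma compact_space_flat_topology: "compact_space (flat_topology R)"
  unfolding compact_space_def topspace_flat_topology
  using compactin_flat_spec_image[OF is_cring, of "\<lambda>x. x"] spec_image_id by simp

lemma compactin_flat_pro_constructible:
  assumes "pro_constructible TYPE('x) R S" "S \<subseteq> Spec R"
  shows "compactin (flat_topology R) S"
  using assms compactin_flat_spec_image unfolding pro_constructible_def by blast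

lemma flat_compact_common_element_notin_prime:
  assumes A: "A \<subseteq> Spec R" and compact: "compactin (flat_topology R) A"
    and P: "P \<in> Spec R" and not_below: "\<forall>Q\<in>A. \<not> Q \<subseteq> P"
  shows "\<exists>b\<in>carrier R - P. \<forall>Q\<in>A. b \<in> Q"
proof -
  from not_below have "\<forall>Q\<in>A. \<exists>a. a \<in> Q - P" by blast
  then have "\<exists>g. \<forall>Q\<in>A. g Q \<in> Q - P" by (rule bchoice)
  then obtain g where g: "\<forall>Q\<in>A. g Q \<in> Q - P" by (rule exE)
  have g_carrier: "g Q \<in> carrier R" if "Q \<in> A" for Q
    using g that A Spec_subset_carrier by blast
  let ?O = "\<lambda>Q. {P' \<in> Spec R. {g Q} \<subseteq> P'}"
  have "\<forall>U\<in>?O ` A. openin (flat_topology R) U"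
  proof
    fix U assume "U \<in> ?O ` A"
    then obtain Q where "Q \<in> A" "U = ?O Q" by blast
    then show "openin (flat_topology R) U"
      using openin_flat_topology_basic[of "{g Q}"] g_carrier by simp
  qed
  moreover have "A \<subseteq> \<Union>(?O ` A)" using g A by blast
  ultimately have "\<exists>\<F>. finite \<F> \<and> \<F> \<subseteq> ?O ` A \<and> A \<subseteq> \<Union>\<F>"
    using compact unfolding compactin_def by blast
  then obtain \<F> where \<F>: "finite \<F>" "\<F> \<subseteq> ?O ` A" "A \<subseteq> \<Union>\<F>" by blast
  obtain A0 where A0: "A0 \<subseteq> A" "finite A0" "\<F> = ?O ` A0"
    using finite_subset_image[OF \<F>(1,2)] by blast
  have "g ` A0 \<subseteq> carrier R - P"
  proof
    fix c assume "c \<in> g ` A0"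
    then obtain Q where "Q \<in> A0" "c = g Q" by (elim imageE)
    with A0(1) have "Q \<in> A" "c = g Q" by auto
    with g g_carrier show "c \<in> carrier R - P" by auto
  qed
  then have "\<exists>b\<in>carrier R - P. \<forall>c\<in>g ` A0. b \<in> PIdl c"
    by (rule common_multiple_notin_prime[OF finite_imageI[OF A0(2)] _ P])
  then obtain b where b: "b \<in> carrier R - P" "\<forall>c\<in>g ` A0. b \<in> PIdl c" by (elim bexE)
  have "b \<in> Q" if "Q \<in> A" for Q
  proof -
    from that \<F>(3) have "Q \<in> \<Union>(?O ` A0)" unfolding A0(3) by blast
    then obtain Q0 where Q0: "Q0 \<in> A0" "g Q0 \<in> Q" by auto
    from that A have "Q \<in> Spec R" by blast
    then have "PIdl (g Q0) \<subseteq> Q" using Q0(2) by (intro cgenideal_minimal Spec_ideal)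
    moreover have "b \<in> PIdl (g Q0)" using b(2) Q0(1) by blast
    ultimately show ?thesis by blast
  qed
  with b(1) show ?thesis by blast
qed

end

section \<open>Support and associated primes\<close>

definition specializations :: "('a, 'c) ring_scheme \<Rightarrow> 'a set set \<Rightarrow> 'a set set" where
  "specializations R A = {P \<in> Spec R. \<exists>Q\<in>A. Q \<subseteq> P}"

context cring
begin

lemma zariski_closed_specializations:
  assumes "A \<subseteq> Spec R" and "compactin (flat_topology R) A"
  shows "zariski_closed R (specializations R A)"
proof (rule zariski_closedI)
  show "specializations R A \<subseteq> Spec R" unfolding specializations_def by blast
next
  fix P assume P: "P \<in> Spec R"
    and above: "{r \<in> carrier R. \<forall>Q\<in>specializations R A. r \<in> Q} \<subseteq> P"
  show "P \<in> specializations R A"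
  proof (rule ccontr)
    assume "P \<notin> specializations R A"
    with P have "\<forall>Q\<in>A. \<not> Q \<subseteq> P" unfolding specializations_def by blast
    then obtain b where b: "b \<in> carrier R - P" "\<forall>Q\<in>A. b \<in> Q"
      using flat_compact_common_element_notin_prime[OF assms P] by blast
    then have "b \<in> {r \<in> carrier R. \<forall>Q\<in>specializations R A. r \<in> Q}"
      unfolding specializations_def by blast
    with above b(1) show False by blast
  qed
qed

end

context Module.module
begin

lemma loc_zero_iff:
  assumes "S \<subseteq> carrier R" "S \<noteq> {}"
  shows "loc_zero R M S \<longleftrightarrow> (\<forall>x\<in>carrier M. \<exists>u\<in>S. u \<odot>\<^bsub>M\<^esub> x = \<zero>\<^bsub>M\<^esub>)"
proof -
  have "loc_rel R M S (x, s) (\<zero>\<^bsub>M\<^esub>, \<one>) \<longleftrightarrow> (\<exists>u\<in>S. u \<odot>\<^bsub>M\<^esub> x = \<zero>\<^bsub>M\<^esub>)"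
    if "x \<in> carrier M" "s \<in> S" for x s
  proof -
    from that assms(1) have "(\<one> \<odot>\<^bsub>M\<^esub> x) \<ominus>\<^bsub>M\<^esub> (s \<odot>\<^bsub>M\<^esub> \<zero>\<^bsub>M\<^esub>) = x"
      by (auto simp: a_minus_def)
    then show ?thesis unfolding loc_rel_def by simp
  qed
  with assms(2) show ?thesis unfolding loc_zero_def by blast
qed

lemma Supp_iff: "P \<in> Supp R M \<longleftrightarrow> P \<in> Spec R \<and> (\<exists>x\<in>carrier M. ann_elem R M x \<subseteq> P)"
proof (cases "P \<in> Spec R")
  case True
  then have "carrier R - P \<noteq> {}" using R.Spec_one_notin by blast
  then have "loc_zero R M (carrier R - P) \<longleftrightarrow> (\<forall>x\<in>carrier M. \<not> ann_elem R M x \<subseteq> P)"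
    by (subst loc_zero_iff) (auto simp: ann_elem_def)
  with True show ?thesis unfolding Supp_def by blast
next
  case False
  then show ?thesis unfolding Supp_def by blast
qed

lemma Supp_subset_Spec: "Supp R M \<subseteq> Spec R"
  unfolding Supp_def by blast

lemma Supp_eq_specializations_Ass: "Supp R M = specializations R (Ass R M)"
proof (intro equalityI subsetI)
  fix P assume "P \<in> Supp R M"
  then obtain x where P: "P \<in> Spec R" and x: "x \<in> carrier M" "ann_elem R M x \<subseteq> P"
    unfolding Supp_iff by blast
  obtain Q where "Q \<in> Spec R" "ann_elem R M x \<subseteq> Q" "Q \<subseteq> P"
    "\<And>Q'. Q' \<in> Spec R \<Longrightarrow> ann_elem R M x \<subseteq> Q' \<Longrightarrow> Q' \<subseteq> Q \<Longrightarrow> Q' = Q"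
    using R.minimal_prime_between[OF P x(2)] by blast
  with x(1) have "Q \<in> Ass R M" "Q \<subseteq> P" unfolding Ass_def by blast+
  with P show "P \<in> specializations R (Ass R M)" unfolding specializations_def by blast
next
  fix P assume "P \<in> specializations R (Ass R M)"
  then obtain Q where P: "P \<in> Spec R" and Q: "Q \<in> Ass R M" "Q \<subseteq> P"
    unfolding specializations_def by blast
  from Q obtain x where "x \<in> carrier M" "ann_elem R M x \<subseteq> P" unfolding Ass_def by blast
  with P show "P \<in> Supp R M" unfolding Supp_iff by blast
qed

lemma Ass_subset_Spec: "Ass R M \<subseteq> Spec R"
  unfolding Ass_def by blast

lemma Ass_subset_Supp: "Ass R M \<subseteq> Supp R M"
  unfolding Supp_eq_specializations_Ass specializations_def using Ass_subset_Spec by blast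

lemma specializations_Supp: "specializations R (Supp R M) = Supp R M"
proof (intro equalityI subsetI)
  fix P assume "P \<in> specializations R (Supp R M)"
  then obtain Q where P: "P \<in> Spec R" and Q: "Q \<in> Supp R M" "Q \<subseteq> P"
    unfolding specializations_def by blast
  from Q obtain x where "x \<in> carrier M" "ann_elem R M x \<subseteq> P" unfolding Supp_iff by blast
  with P show "P \<in> Supp R M" unfolding Supp_iff by blast
next
  fix P assume "P \<in> Supp R M"
  then show "P \<in> specializations R (Supp R M)"
    unfolding specializations_def using Supp_def by blast
qed

lemma zariski_closed_Supp_if_compact_Ass:
  "compactin (flat_topology R) (Ass R M) \<Longrightarrow> zariski_closed R (Supp R M)"
  unfolding Supp_eq_specializations_Ass by (rule R.zariski_closed_specializations[OF Ass_subset_Spec])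

lemma zariski_closed_Supp_if_pro_constructible:
  assumes "pro_constructible TYPE('x) R (Supp R M)"
  shows "zariski_closed R (Supp R M)"
proof -
  have "compactin (flat_topology R) (Supp R M)"
    using assms Supp_subset_Spec by (rule R.compactin_flat_pro_constructible)
  with Supp_subset_Spec have "zariski_closed R (specializations R (Supp R M))"
    by (rule R.zariski_closed_specializations)
  then show ?thesis unfolding specializations_Supp .
qed
end

section \<open>Modules whose annihilator is that of a finite subset\<close>

text \<open>This is all that the argument uses of almost finite generation and of finite length.\<close>

definition ann_finitely_determined :: "('a, 'c) ring_scheme \<Rightarrow> ('a, 'm, 'e) module_scheme \<Rightarrow> bool" where
  "ann_finitely_determined R M \<longleftrightarrow> (\<exists>G. finite G \<and> G \<subseteq> carrier M \<and>
     (\<forall>u\<in>carrier R. (\<forall>g\<in>G. u \<odot>\<^bsub>M\<^esub> g = \<zero>\<^bsub>M\<^esub>) \<longrightarrow> u \<in> ann R M))"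

context Module.module
begin

lemma ann_ideal: "ideal (ann R M) R"
proof -
  have sub: "ann R M \<subseteq> carrier R" unfolding ann_def by blast
  have zero: "\<zero> \<in> ann R M" unfolding ann_def by simp
  have neg: "\<ominus> a \<in> ann R M" if "a \<in> ann R M" for a
    using that smult_l_minus unfolding ann_def by simp
  have add: "a \<oplus> b \<in> ann R M" if "a \<in> ann R M" "b \<in> ann R M" for a b
    using that smult_l_distr unfolding ann_def by simp
  have mult: "x \<otimes> a \<in> ann R M" "a \<otimes> x \<in> ann R M" if "a \<in> ann R M" "x \<in> carrier R" for a x
    using that smult_assoc1 R.m_comm unfolding ann_def by simp_all
  have "subgroup (ann R M) (add_monoid R)"
    by (rule R.add.subgroupI) (use sub zero neg add in auto)
  then show ?thesis by (rule idealI[OF R.ring_axioms]) (use mult in auto)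
qed

lemma multiplicative_set_kills_finite_subset:
  assumes S: "S \<subseteq> carrier R" "\<one> \<in> S" "\<And>a b. a \<in> S \<Longrightarrow> b \<in> S \<Longrightarrow> a \<otimes> b \<in> S"
    and kills: "\<forall>x\<in>carrier M. \<exists>u\<in>S. u \<odot>\<^bsub>M\<^esub> x = \<zero>\<^bsub>M\<^esub>"
    and G: "finite G" "G \<subseteq> carrier M"
  shows "\<exists>u\<in>S. \<forall>g\<in>G. u \<odot>\<^bsub>M\<^esub> g = \<zero>\<^bsub>M\<^esub>"
  using G
proof (induction G rule: finite_induct)
  case empty
  then show ?case using S(2) by blast
next
  case (insert g G)
  then obtain u where u: "u \<in> S" "\<forall>g'\<in>G. u \<odot>\<^bsub>M\<^esub> g' = \<zero>\<^bsub>M\<^esub>" by auto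
  from insert.prems obtain v where v: "v \<in> S" "v \<odot>\<^bsub>M\<^esub> g = \<zero>\<^bsub>M\<^esub>" using kills by auto
  have uv: "u \<in> carrier R" "v \<in> carrier R" using u(1) v(1) S(1) by auto
  have "(u \<otimes> v) \<odot>\<^bsub>M\<^esub> g' = \<zero>\<^bsub>M\<^esub>" if "g' \<in> insert g G" for g'
  proof (cases "g' = g")
    case True
    with insert.prems uv v(2) show ?thesis by (simp add: smult_assoc1)
  next
    case False
    with that insert.prems have "g' \<in> G" "g' \<in> carrier M" by auto
    with uv u(2) show ?thesis by (simp add: smult_assoc1 R.m_comm[of u v])
  qed
  with S(3)[OF u(1) v(1)] show ?case by blast
qed

lemma multiplicative_set_meets_ann:
  assumes "ann_finitely_determined R M"
    and S: "S \<subseteq> carrier R" "\<one> \<in> S" "\<And>a b. a \<in> S \<Longrightarrow> b \<in> S \<Longrightarrow> a \<otimes> b \<in> S"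
    and kills: "\<forall>x\<in>carrier M. \<exists>u\<in>S. u \<odot>\<^bsub>M\<^esub> x = \<zero>\<^bsub>M\<^esub>"
  shows "S \<inter> ann R M \<noteq> {}"
proof -
  obtain G where G: "finite G" "G \<subseteq> carrier M"
    and determines: "\<forall>u\<in>carrier R. (\<forall>g\<in>G. u \<odot>\<^bsub>M\<^esub> g = \<zero>\<^bsub>M\<^esub>) \<longrightarrow> u \<in> ann R M"
    using assms(1) unfolding ann_finitely_determined_def by blast
  obtain u where "u \<in> S" "\<forall>g\<in>G. u \<odot>\<^bsub>M\<^esub> g = \<zero>\<^bsub>M\<^esub>"
    using multiplicative_set_kills_finite_subset[OF S kills G] by blast
  with S(1) determines show ?thesis by blast
qed

lemma Supp_eq_VV_ann:
  assumes "ann_finitely_determined R M"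
  shows "Supp R M = VV R (ann R M)"
proof (intro equalityI subsetI)
  fix P assume "P \<in> Supp R M"
  then obtain x where "P \<in> Spec R" "x \<in> carrier M" "ann_elem R M x \<subseteq> P"
    unfolding Supp_iff by blast
  moreover from \<open>x \<in> carrier M\<close> have "ann R M \<subseteq> ann_elem R M x"
    unfolding ann_def ann_elem_def by blast
  ultimately show "P \<in> VV R (ann R M)" unfolding VV_def by blast
next
  fix P assume "P \<in> VV R (ann R M)"
  then have P: "P \<in> Spec R" "ann R M \<subseteq> P" unfolding VV_def by simp_all
  show "P \<in> Supp R M"
  proof (rule ccontr)
    assume "P \<notin> Supp R M"
    with P(1) have "\<forall>x\<in>carrier M. \<exists>u\<in>carrier R - P. u \<odot>\<^bsub>M\<^esub> x = \<zero>\<^bsub>M\<^esub>"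
      unfolding Supp_iff ann_elem_def by blast
    moreover have "\<one> \<in> carrier R - P" using R.Spec_one_notin[OF P(1)] by simp
    moreover have "a \<otimes> b \<in> carrier R - P" if "a \<in> carrier R - P" "b \<in> carrier R - P" for a b
      using that R.Spec_mult_mem[OF P(1)] by simp
    ultimately have "(carrier R - P) \<inter> ann R M \<noteq> {}"
      using multiplicative_set_meets_ann[OF assms, of "carrier R - P"] by blast
    with P(2) show False by blast
  qed
qed

lemma Obs_eq_radical_ann:
  assumes "ann_finitely_determined R M"
  shows "Obs R M = radical R (ann R M)"
proof -
  have "loc_zero R M {a [^] (n::nat) | n. True} \<longleftrightarrow> (\<exists>n::nat. a [^] n \<in> ann R M)"
    if a: "a \<in> carrier R" for a
  proof -
    let ?S = "{a [^] (n::nat) | n. True}"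
    have S: "?S \<subseteq> carrier R" "\<one> \<in> ?S" using a by (auto intro: exI[of _ "0::nat"])
    have mult: "x \<otimes> y \<in> ?S" if "x \<in> ?S" "y \<in> ?S" for x y
    proof -
      from that obtain m n :: nat where "x = a [^] m" "y = a [^] n" by blast
      then have "x \<otimes> y = a [^] (m + n)" using R.nat_pow_mult[OF a] by simp
      then show ?thesis by blast
    qed
    have "loc_zero R M ?S \<longleftrightarrow> (\<forall>x\<in>carrier M. \<exists>u\<in>?S. u \<odot>\<^bsub>M\<^esub> x = \<zero>\<^bsub>M\<^esub>)"
      using S by (intro loc_zero_iff) auto
    also have "\<dots> \<longleftrightarrow> ?S \<inter> ann R M \<noteq> {}"
      using multiplicative_set_meets_ann[OF assms S mult] unfolding ann_def by blast
    finally show ?thesis by blast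
  qed
  then show ?thesis unfolding Obs_def radical_def by blast
qed

lemma submodule_zero_closed: "submodule N R M \<Longrightarrow> \<zero>\<^bsub>M\<^esub> \<in> N"
  using subgroup.one_closed[OF submodule.axioms(1)] by fastforce

lemma submodule_Int:
  assumes A: "submodule A R M" and B: "submodule B R M"
  shows "submodule (A \<inter> B) R M"
proof (rule submoduleI)
  show "A \<inter> B \<subseteq> carrier M" using submoduleE(1)[OF A] by blast
  show "\<zero>\<^bsub>M\<^esub> \<in> A \<inter> B" using submodule_zero_closed A B by blast
  show "\<ominus>\<^bsub>M\<^esub> a \<in> A \<inter> B" if "a \<in> A \<inter> B" for a
    using submoduleE(3)[OF A] submoduleE(3)[OF B] that by blast
  show "a \<oplus>\<^bsub>M\<^esub> b \<in> A \<inter> B" if "a \<in> A \<inter> B" "b \<in> A \<inter> B" for a b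
    using submoduleE(5)[OF A] submoduleE(5)[OF B] that by blast
  show "a \<odot>\<^bsub>M\<^esub> x \<in> A \<inter> B" if "a \<in> carrier R" "x \<in> A \<inter> B" for a x
    using submoduleE(4)[OF A] submoduleE(4)[OF B] that by blast
qed

lemma submodule_killed_by:
  assumes u: "u \<in> carrier R"
  shows "submodule {x \<in> carrier M. u \<odot>\<^bsub>M\<^esub> x = \<zero>\<^bsub>M\<^esub>} R M"
proof (rule submoduleI)
  show "{x \<in> carrier M. u \<odot>\<^bsub>M\<^esub> x = \<zero>\<^bsub>M\<^esub>} \<subseteq> carrier M" by blast
  show "\<zero>\<^bsub>M\<^esub> \<in> {x \<in> carrier M. u \<odot>\<^bsub>M\<^esub> x = \<zero>\<^bsub>M\<^esub>}" using u by simp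
  show "\<ominus>\<^bsub>M\<^esub> x \<in> {x \<in> carrier M. u \<odot>\<^bsub>M\<^esub> x = \<zero>\<^bsub>M\<^esub>}"
    if "x \<in> {x \<in> carrier M. u \<odot>\<^bsub>M\<^esub> x = \<zero>\<^bsub>M\<^esub>}" for x
    using that u by (simp add: smult_r_minus)
  show "x \<oplus>\<^bsub>M\<^esub> y \<in> {x \<in> carrier M. u \<odot>\<^bsub>M\<^esub> x = \<zero>\<^bsub>M\<^esub>}"
    if "x \<in> {x \<in> carrier M. u \<odot>\<^bsub>M\<^esub> x = \<zero>\<^bsub>M\<^esub>}" "y \<in> {x \<in> carrier M. u \<odot>\<^bsub>M\<^esub> x = \<zero>\<^bsub>M\<^esub>}"
    for x y
    using that u by (simp add: smult_r_distr)
  show "a \<odot>\<^bsub>M\<^esub> x \<in> {x \<in> carrier M. u \<odot>\<^bsub>M\<^esub> x = \<zero>\<^bsub>M\<^esub>}"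
    if "a \<in> carrier R" "x \<in> {x \<in> carrier M. u \<odot>\<^bsub>M\<^esub> x = \<zero>\<^bsub>M\<^esub>}" for a x
  proof -
    from that have x: "x \<in> carrier M" "u \<odot>\<^bsub>M\<^esub> x = \<zero>\<^bsub>M\<^esub>" by simp_all
    have "u \<odot>\<^bsub>M\<^esub> (a \<odot>\<^bsub>M\<^esub> x) = a \<odot>\<^bsub>M\<^esub> (u \<odot>\<^bsub>M\<^esub> x)"
      using that(1) u x(1) by (simp add: smult_assoc1[symmetric] R.m_comm)
    with that(1) x show ?thesis by simp
  qed
qed

lemma fin_gen_ann_finitely_determined:
  assumes "fin_gen R M"
  shows "ann_finitely_determined R M"
proof -
  obtain G where G: "finite G" "G \<subseteq> carrier M"
    and generates: "\<forall>N. submodule N R M \<and> G \<subseteq> N \<longrightarrow> N = carrier M"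
    using assms unfolding fin_gen_def by blast
  have "u \<in> ann R M" if u: "u \<in> carrier R" "\<forall>g\<in>G. u \<odot>\<^bsub>M\<^esub> g = \<zero>\<^bsub>M\<^esub>" for u
  proof -
    have "G \<subseteq> {x \<in> carrier M. u \<odot>\<^bsub>M\<^esub> x = \<zero>\<^bsub>M\<^esub>}" using u(2) G(2) by blast
    then have "{x \<in> carrier M. u \<odot>\<^bsub>M\<^esub> x = \<zero>\<^bsub>M\<^esub>} = carrier M"
      using generates submodule_killed_by[OF u(1)] by blast
    with u(1) show ?thesis unfolding ann_def by blast
  qed
  with G show ?thesis unfolding ann_finitely_determined_def by blast
qed

lemma covering_submodule_spanned_by_insert:
  assumes L: "submodule L R M" and K: "K \<subset> L"
    and no_between: "\<not> (\<exists>N. submodule N R M \<and> K \<subset> N \<and> N \<subset> L)"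
    and spans: "\<forall>N. submodule N R M \<and> G \<subseteq> N \<longrightarrow> K \<subseteq> N"
    and x: "x \<in> L - K"
  shows "\<forall>N. submodule N R M \<and> insert x G \<subseteq> N \<longrightarrow> L \<subseteq> N"
proof (intro allI impI)
  fix N assume N: "submodule N R M \<and> insert x G \<subseteq> N"
  then have "K \<subseteq> N" using spans by blast
  from N L have "submodule (N \<inter> L) R M" by (intro submodule_Int) simp_all
  moreover have "K \<subset> N \<inter> L" using \<open>K \<subseteq> N\<close> K x N by blast
  ultimately have "N \<inter> L = L" using no_between by blast
  then show "L \<subseteq> N" by blast
qed

lemma finite_length_fin_gen:
  assumes "finite_length R M"
  shows "fin_gen R M"
proof -
  obtain n :: nat and Ms :: "nat \<Rightarrow> _" where
    Ms: "Ms 0 = {\<zero>\<^bsub>M\<^esub>}" "Ms n = carrier M" "\<forall>i\<le>n. submodule (Ms i) R M"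
    and maximal: "\<forall>i<n. Ms i \<subset> Ms (Suc i) \<and>
        \<not> (\<exists>N. submodule N R M \<and> Ms i \<subset> N \<and> N \<subset> Ms (Suc i))"
    using assms unfolding finite_length_def by (elim exE conjE)
  have "\<exists>G. finite G \<and> G \<subseteq> Ms i \<and> (\<forall>N. submodule N R M \<and> G \<subseteq> N \<longrightarrow> Ms i \<subseteq> N)"
    if "i \<le> n" for i
    using that
  proof (induction i)
    case 0
    have "\<forall>N. submodule N R M \<and> {} \<subseteq> N \<longrightarrow> Ms 0 \<subseteq> N"
      using Ms(1) submodule_zero_closed by simp
    then show ?case by blast
  next
    case (Suc i)
    from Suc.prems have "i < n" by simp
    with Suc.IH obtain G where G: "finite G" "G \<subseteq> Ms i"
      and spans: "\<forall>N. submodule N R M \<and> G \<subseteq> N \<longrightarrow> Ms i \<subseteq> N"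
      by (meson less_imp_le)
    from \<open>i < n\<close> maximal have step: "Ms i \<subset> Ms (Suc i)"
      and no_between: "\<not> (\<exists>N. submodule N R M \<and> Ms i \<subset> N \<and> N \<subset> Ms (Suc i))"
      by simp_all
    from step obtain x where x: "x \<in> Ms (Suc i) - Ms i" by blast
    have "submodule (Ms (Suc i)) R M" using Ms(3) Suc.prems by simp
    then have "\<forall>N. submodule N R M \<and> insert x G \<subseteq> N \<longrightarrow> Ms (Suc i) \<subseteq> N"
      using step no_between spans x by (rule covering_submodule_spanned_by_insert)
    moreover have "finite (insert x G)" "insert x G \<subseteq> Ms (Suc i)" using G step x by blast+
    ultimately show ?case by blast
  qed
  from this[OF order_refl] obtain G where G: "finite G" "G \<subseteq> carrier M"
    and spans: "\<forall>N. submodule N R M \<and> G \<subseteq> N \<longrightarrow> carrier M \<subseteq> N"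
    unfolding Ms(2) by (elim exE conjE)
  have "N = carrier M" if "submodule N R M" "G \<subseteq> N" for N
    using spans submoduleE(1)[OF that(1)] that by blast
  with G show ?thesis unfolding fin_gen_def by blast
qed

lemma afg_ann_finitely_determined:
  assumes "afg TYPE('s) R M"
  shows "ann_finitely_determined R M"
proof -
  obtain S :: "'s ring" and f and F :: "('s, 'c) module" where "cring S" "f \<in> ring_hom R S" "Module.module S F" "fin_gen S F"
    and F: "carrier F = carrier M" "add F = add M" "zero F = zero M"
      "\<forall>r\<in>carrier R. \<forall>x\<in>carrier M. r \<odot>\<^bsub>M\<^esub> x = f r \<odot>\<^bsub>F\<^esub> x"
    using assms unfolding afg_def by (elim exE conjE)
  then have f: "f \<in> carrier R \<rightarrow> carrier S" and "ann_finitely_determined S F"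
    using ring_hom_closed module.fin_gen_ann_finitely_determined by auto
  then obtain G where G: "finite G" "G \<subseteq> carrier F"
    and determines: "\<forall>v\<in>carrier S. (\<forall>g\<in>G. v \<odot>\<^bsub>F\<^esub> g = \<zero>\<^bsub>F\<^esub>) \<longrightarrow> v \<in> ann S F"
    unfolding ann_finitely_determined_def by blast
  have "u \<in> ann R M" if "u \<in> carrier R" "\<forall>g\<in>G. u \<odot>\<^bsub>M\<^esub> g = \<zero>\<^bsub>M\<^esub>" for u
  proof -
    have "f u \<odot>\<^bsub>F\<^esub> g = \<zero>\<^bsub>F\<^esub>" if "g \<in> G" for g
    proof -
      from \<open>g \<in> G\<close> G(2) F(1) have "g \<in> carrier M" by blast
      with F(3,4) \<open>u \<in> carrier R\<close> \<open>g \<in> G\<close> that show ?thesis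
        using \<open>\<forall>g\<in>G. u \<odot>\<^bsub>M\<^esub> g = \<zero>\<^bsub>M\<^esub>\<close> by metis
    qed
    with determines f that(1) have "f u \<in> ann S F" by blast
    with that(1) F show ?thesis unfolding ann_def by auto
  qed
  with G F(1) show ?thesis unfolding ann_finitely_determined_def by auto
qed

lemma zariski_closed_Supp_if_ann_finitely_determined:
  "ann_finitely_determined R M \<Longrightarrow> zariski_closed R (Supp R M)"
  unfolding zariski_closed_def using Supp_eq_VV_ann ann_ideal by blast

lemma VV_Obs_eq_Supp:
  assumes "ann_finitely_determined R M"
  shows "VV R (Obs R M) = Supp R M"
proof -
  have "ann R M \<subseteq> carrier R" unfolding ann_def by blast
  then show ?thesis
    using assms Obs_eq_radical_ann Supp_eq_VV_ann R.VV_radical by simp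
qed

end

theorem proposition2p11:
  fixes R :: "'a ring" and E :: "('a, 'm) module"
  assumes "cring R" and "Module.module R E"
  shows
    "(zariski_closed R (Supp R E) \<longrightarrow> pro_constructible TYPE('a set) R (Supp R E))
   \<and> (pro_constructible TYPE('b) R (Supp R E) \<longrightarrow> zariski_closed R (Supp R E))
   \<and> (finite (Supp R E) \<longrightarrow> zariski_closed R (Supp R E))
   \<and> (compactin (flat_topology R) (Ass R E) \<longrightarrow> zariski_closed R (Supp R E))
   \<and> (pro_constructible TYPE('c) R (Ass R E) \<longrightarrow> compactin (flat_topology R) (Ass R E))
   \<and> (finite (Ass R E) \<longrightarrow> compactin (flat_topology R) (Ass R E))
   \<and> (closedin (flat_topology R) (Ass R E) \<longrightarrow> compactin (flat_topology R) (Ass R E))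
   \<and> (finite_length R E \<longrightarrow> zariski_closed R (Supp R E))
   \<and> (afg TYPE('s) R E \<longrightarrow>
        zariski_closed R (Supp R E) \<and>
        VV R (Obs R E) = Supp R E \<and> Supp R E = VV R (ann R E) \<and>
        Obs R E = radical R (ann R E))"
proof -
  interpret R: cring R by (rule assms(1))
  interpret E: Module.module R E by (rule assms(2))
  have Ass_compact_if_finite: "finite (Ass R E) \<Longrightarrow> compactin (flat_topology R) (Ass R E)"
    using E.Ass_subset_Spec R.topspace_flat_topology by (simp add: finite_imp_compactin)
  show ?thesis
  proof (intro conjI impI)
    show "pro_constructible TYPE('a set) R (Supp R E)" if "zariski_closed R (Supp R E)"
      using that by (rule R.zariski_closed_pro_constructible)
    show "zariski_closed R (Supp R E)" if "pro_constructible TYPE('b) R (Supp R E)"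
      using that by (rule E.zariski_closed_Supp_if_pro_constructible)
    show "zariski_closed R (Supp R E)" if "finite (Supp R E)"
      using finite_subset[OF E.Ass_subset_Supp that] Ass_compact_if_finite
        E.zariski_closed_Supp_if_compact_Ass by blast
    show "zariski_closed R (Supp R E)" if "compactin (flat_topology R) (Ass R E)"
      using that by (rule E.zariski_closed_Supp_if_compact_Ass)
    show "compactin (flat_topology R) (Ass R E)" if "pro_constructible TYPE('c) R (Ass R E)"
      using that E.Ass_subset_Spec by (rule R.compactin_flat_pro_constructible)
    show "compactin (flat_topology R) (Ass R E)" if "finite (Ass R E)"
      using that by (rule Ass_compact_if_finite)
    show "compactin (flat_topology R) (Ass R E)" if "closedin (flat_topology R) (Ass R E)"
      using R.compact_space_flat_topology that by (rule closedin_compact_space)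
    show "zariski_closed R (Supp R E)" if "finite_length R E"
      using that E.finite_length_fin_gen E.fin_gen_ann_finitely_determined
        E.zariski_closed_Supp_if_ann_finitely_determined by blast
  next
    assume "afg TYPE('s) R E"
    then have fd: "ann_finitely_determined R E" by (rule E.afg_ann_finitely_determined)
    show "zariski_closed R (Supp R E)" using fd by (rule E.zariski_closed_Supp_if_ann_finitely_determined)
    show "VV R (Obs R E) = Supp R E" using fd by (rule E.VV_Obs_eq_Supp)
    show "Supp R E = VV R (ann R E)" using fd by (rule E.Supp_eq_VV_ann)
    show "Obs R E = radical R (ann R E)" using fd by (rule E.Obs_eq_radical_ann)
  qed
qed

end
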